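(* Let $n$ be an odd positive integer, $n_1=\lceil n/2\rceil$, $n_0=\lfloor n/2\rfloor$. Suppose $k\in K_0(\mathfrak{p})$ and $g\in\{1,\begin{pmatrix}0&1\\\varpi&0\end{pmatrix}\}$. Then $k g w a(\varpi^{n_1})=k'a(\varpi^{n_1})g'z$ for some $k'\in K$ with $l(k'a(\varpi^{n_1}))\le n_0$, some $g'\in\{1,\begin{pmatrix}0&1\\\varpi^n&0\end{pmatrix}\}$, and some $z\in Z$.
   Context: $F$ is a non-archimedean local field of characteristic $0$ with ring of integers $\mathfrak{o}$, maximal ideal $\mathfrak{p}$, uniformizer $\varpi$; $U_j=\{x\in\mathfrak{o}^\times: v(x-1)\ge j\}$. $G=\mathrm{GL}_2(F)$, $K=\mathrm{GL}_2(\mathfrak{o})$, $K_0(\mathfrak{p})=K\cap\begin{pmatrix}\mathfrak{o}&\mathfrak{o}\\\mathfrak{p}&\mathfrak{o}\end{pmatrix}$, $K_1(\mathfrak{p}^n)=K\cap\begin{pmatrix}1+\mathfrak{p}^n&\mathfrak{o}\\\mathfrak{p}^n&\mathfrak{o}\end{pmatrix}$, $w=\begin{pmatrix}0&1\\-1&0\end{pmatrix}$, $a(y)=\mathrm{diag}(y,1)$, $n(x)=\begin{pmatrix}1&x\\0&1\end{pmatrix}$, $Z$ the center, $N=\{n(x)\}$. There is a disjoint decomposition $G=\bigsqcup_{t\in\mathbb{Z}}\bigsqcup_{0\le l\le n}\bigsqcup_{v\in\mathfrak{o}^\times/U_{\min(l,n-l)}}ZN a(\varpi^t)wn(\varpi^{-l}v)K_1(\mathfrak{p}^n)$;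 for $h\in G$, $l(h)$ denotes the unique integer $0\le l\le n$ with $h\in ZNa(\varpi^{t})wn(\varpi^{-l}v)K_1(\mathfrak{p}^n)$ for some $t\in\mathbb Z$, $v\in\mathfrak{o}^\times$. *)

theory Defs
  imports "HOL-Analysis.Analysis"
begin

text \<open>A field of characteristic 0 (type class field_char_0) carrying a normalized
discrete valuation v (values on nonzero elements; v 0 is irrelevant), complete
for the valuation topology, with finite residue field.\<close>

definition in_pow :: "('a::field \<Rightarrow> int) \<Rightarrow> int \<Rightarrow> 'a \<Rightarrow> bool" where
  "in_pow v j x \<longleftrightarrow> x = 0 \<or> v x \<ge> j"

definition nonarch_local_field :: "('a::field_char_0 \<Rightarrow> int) \<Rightarrow> bool" where
  "nonarch_local_field v \<longleftrightarrow>
     (\<forall>x y. x \<noteq> 0 \<longrightarrow> y \<noteq> 0 \<longrightarrow> v (x * y) = v x + v y) \<and>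
     (\<forall>x y. x \<noteq> 0 \<longrightarrow> y \<noteq> 0 \<longrightarrow> x + y \<noteq> 0 \<longrightarrow> v (x + y) \<ge> min (v x) (v y)) \<and>
     (\<exists>u. u \<noteq> 0 \<and> v u = 1) \<and>
     (\<exists>S. finite S \<and> (\<forall>s\<in>S. in_pow v 0 s) \<and>
          (\<forall>x. in_pow v 0 x \<longrightarrow> (\<exists>s\<in>S. in_pow v 1 (x - s)))) \<and>
     (\<forall>f::nat \<Rightarrow> 'a. (\<forall>N. \<exists>M. \<forall>i\<ge>M. \<forall>j\<ge>M. in_pow v N (f i - f j)) \<longrightarrow>
          (\<exists>L. \<forall>N. \<exists>M. \<forall>i\<ge>M. in_pow v N (f i - L)))"

definition is_unit_v :: "('a::field \<Rightarrow> int) \<Rightarrow> 'a \<Rightarrow> bool" where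
  "is_unit_v v x \<longleftrightarrow> x \<noteq> 0 \<and> v x = 0"

definition mat2 :: "'a::zero \<Rightarrow> 'a \<Rightarrow> 'a \<Rightarrow> 'a \<Rightarrow> 'a^2^2" where
  "mat2 a b c d = (\<chi> i j. if i = 1 then (if j = 1 then a else b) else (if j = 1 then c else d))"

definition GL2 :: "(('a::field)^2^2) set" where
  "GL2 = {A. det A \<noteq> 0}"

definition wmat :: "('a::comm_ring_1)^2^2" where
  "wmat = mat2 0 1 (-1) 0"

definition amat :: "'a::comm_ring_1 \<Rightarrow> 'a^2^2" where
  "amat y = mat2 y 0 0 1"

definition nmat :: "'a::comm_ring_1 \<Rightarrow> 'a^2^2" where
  "nmat x = mat2 1 x 0 1"

definition center :: "(('a::field)^2^2) set" where
  "center = {mat c | c. c \<noteq> 0}"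

definition Kmax :: "('a::field \<Rightarrow> int) \<Rightarrow> ('a^2^2) set" where
  "Kmax v = {mat2 a b c d | a b c d. in_pow v 0 a \<and> in_pow v 0 b \<and> in_pow v 0 c
                \<and> in_pow v 0 d \<and> is_unit_v v (a * d - b * c)}"

definition K0p :: "('a::field \<Rightarrow> int) \<Rightarrow> ('a^2^2) set" where
  "K0p v = {mat2 a b c d | a b c d. mat2 a b c d \<in> Kmax v \<and> in_pow v 1 c}"

definition K1 :: "('a::field \<Rightarrow> int) \<Rightarrow> nat \<Rightarrow> ('a^2^2) set" where
  "K1 v n = {mat2 a b c d | a b c d. mat2 a b c d \<in> Kmax v
                \<and> in_pow v (int n) (a - 1) \<and> in_pow v (int n) c}"

definition lvl :: "('a::field \<Rightarrow> int) \<Rightarrow> 'a \<Rightarrow> nat \<Rightarrow> 'a^2^2 \<Rightarrow> nat" where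
  "lvl v \<pi> n h = (THE l. l \<le> n \<and>
      (\<exists>z x t u k. z \<in> center \<and> is_unit_v v u \<and> k \<in> K1 v n \<and>
         h = z ** nmat x ** amat (\<pi> powi t) ** wmat ** nmat (\<pi> powi (- int l) * u) ** k))"

end

theory Submission
  imports Defs
begin

text \<open>For \<open>h\<close> with bottom row \<open>(R, S)\<close>, \<open>R \<noteq> 0\<close>, the level is read off that row: it is \<open>0\<close> if
  \<open>v S \<ge> v R\<close> and \<open>v R - v S\<close> otherwise, provided this gap is below \<open>n\<close>. Indeed the bottom row of
  \<open>z n(x) a(p) w n(\<pi>\<^sup>-\<^sup>l u) k\<close> is \<open>-c (A + yC, B + yD)\<close> with \<open>y = \<pi>\<^sup>-\<^sup>l u\<close>, and for
  \<open>k \<in> K\<^sub>1(\<pi>\<^sup>n)\<close> its valuations are forced, while conversely such a decomposition can be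
  written down explicitly. Now \<open>k' = k w\<close> works for both choices of \<open>g\<close>, because
  \<open>g w a(\<pi>\<^sup>n\<^sup>1) = w a(\<pi>\<^sup>n\<^sup>1) g' z\<close>; the bottom row of \<open>k w a(\<pi>\<^sup>n\<^sup>1)\<close> is \<open>(-d \<pi>\<^sup>n\<^sup>1, c)\<close>
  with \<open>d\<close> a unit and \<open>v c \<ge> 1\<close>, whose gap is at most \<open>n\<^sub>1 - 1 = n\<^sub>0\<close>.\<close>

lemma mat2_eq_iff:
  "(mat2 a b c d :: 'a::zero^2^2) = mat2 a' b' c' d' \<longleftrightarrow> a = a' \<and> b = b' \<and> c = c' \<and> d = d'"
  by (auto simp: mat2_def vec_eq_iff forall_2)

lemma mat2_mult:
  "(mat2 a b c d :: 'a::comm_ring_1^2^2) ** mat2 a' b' c' d'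
     = mat2 (a*a' + b*c') (a*b' + b*d') (c*a' + d*c') (c*b' + d*d')"
  by (simp add: mat2_def matrix_matrix_mult_def vec_eq_iff forall_2 sum_2)

lemma mat_eq_mat2: "(mat x :: 'a::comm_ring_1^2^2) = mat2 x 0 0 x"
  by (simp add: mat2_def mat_def vec_eq_iff forall_2)

lemma mat2_decomposition:
  "(mat c0 ** nmat x ** amat p ** wmat ** nmat y ** mat2 A B C D :: 'a::comm_ring_1^2^2)
     = mat2 (c0 * ((p - x*y)*C - x*A)) (c0 * ((p - x*y)*D - x*B))
            (- c0 * (A + y*C)) (- c0 * (B + y*D))"
  by (simp add: mat_eq_mat2 nmat_def amat_def wmat_def mat2_mult mat2_eq_iff algebra_simps)

lemma mat2_eq_decomposition:
  fixes P Q R S :: "'a::field"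
  assumes "R \<noteq> 0" "B + y*D = S/R" "p*D = (P*S - Q*R) / R^2"
  shows "mat2 P Q R S = mat (- R) ** nmat (P/R) ** amat p ** wmat ** nmat y ** mat2 1 B 0 D"
proof -
  have S: "S = R * (B + y*D)" using assms(1,2) by simp
  have "Q * R = P * S - p*D*R^2" using assms(1,3) by (simp add: field_simps)
  then have "Q = P/R * (B + y*D) * R - p*D*R"
    using assms(1) unfolding S by (simp add: field_simps power2_eq_square)
  then have "Q = - R * ((p - P/R*y) * D - P/R * B)" by (simp add: algebra_simps)
  with S assms(1) show ?thesis
    by (simp add: mat2_decomposition mat2_eq_iff)
qed

lemma antidiagonal_mult_wmat_amat:
  fixes p :: "'a::field"
  assumes "p \<noteq> 0"
  shows "mat2 0 1 p 0 ** wmat ** amat (p ^ Suc N)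
           = wmat ** amat (p ^ Suc N) ** mat2 0 1 (p ^ (2*N + 1)) 0 ** mat (- inverse (p ^ N))"
  using assms
  by (simp add: wmat_def amat_def mat_eq_mat2 mat2_mult mat2_eq_iff field_simps
      power_add power_mult power2_eq_square)

locale uniformized_local_field =
  fixes v :: "'a::field_char_0 \<Rightarrow> int" and \<pi> :: 'a
  assumes local_field: "nonarch_local_field v" and unif_nonzero: "\<pi> \<noteq> 0" and val_unif: "v \<pi> = 1"
begin

lemma val_mult: "x \<noteq> 0 \<Longrightarrow> y \<noteq> 0 \<Longrightarrow> v (x * y) = v x + v y"
  using local_field unfolding nonarch_local_field_def by blast

lemma val_add_ge_min: "x \<noteq> 0 \<Longrightarrow> y \<noteq> 0 \<Longrightarrow> x + y \<noteq> 0 \<Longrightarrow> v (x + y) \<ge> min (v x) (v y)"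
  using local_field unfolding nonarch_local_field_def by blast

lemma val_one: "v 1 = 0"
  using val_mult[of 1 1] by simp

lemma val_minus: "v (- x) = v x"
proof (cases "x = 0")
  case False
  have "v (-1) = 0" using val_mult[of "-1" "-1"] val_one by simp
  then show ?thesis using val_mult[of "-1" x] False by simp
qed simp

lemma val_inverse: "x \<noteq> 0 \<Longrightarrow> v (inverse x) = - v x"
  using val_mult[of x "inverse x"] val_one by simp

lemma val_divide: "x \<noteq> 0 \<Longrightarrow> y \<noteq> 0 \<Longrightarrow> v (x / y) = v x - v y"
  using val_mult[of x "inverse y"] val_inverse[of y] by (simp add: divide_inverse)

lemma val_unif_power: "v (\<pi> ^ k) = int k"
  by (induction k) (simp_all add: val_one val_mult unif_nonzero val_unif)

lemma val_unif_power_int: "v (\<pi> powi k) = k"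
proof (cases "k \<ge> 0")
  case True
  then show ?thesis using val_unif_power[of "nat k"] by (simp add: power_int_def)
next
  case False
  then show ?thesis using val_unif_power[of "nat (- k)"] val_inverse[of "\<pi> ^ nat (- k)"] unif_nonzero
    by (simp add: power_int_def power_inverse)
qed

lemma val_add_dominant:
  assumes "x \<noteq> 0" and "y = 0 \<or> v x < v y"
  shows "x + y \<noteq> 0 \<and> v (x + y) = v x"
proof (cases "y = 0")
  case False
  with assms have less: "v x < v y" by simp
  have sum_nonzero: "x + y \<noteq> 0"
  proof
    assume "x + y = 0"
    then have "y = - x" by (simp add: eq_neg_iff_add_eq_0 add.commute)
    with less show False by (simp add: val_minus)
  qed
  have "v (x + y) \<ge> v x" using val_add_ge_min[OF assms(1) False sum_nonzero] less by simp
  moreover have "v x \<ge> min (v (x + y)) (v (- y))"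
    using val_add_ge_min[of "x + y" "- y"] sum_nonzero False assms(1) by simp
  ultimately show ?thesis using sum_nonzero less by (simp add: val_minus)
qed (use assms in simp)

lemma in_pow_add: "in_pow v j x \<Longrightarrow> in_pow v j y \<Longrightarrow> in_pow v j (x + y)"
  unfolding in_pow_def using val_add_ge_min[of x y]
  by (cases "x = 0"; cases "y = 0"; cases "x + y = 0") auto

lemma in_pow_mult: "in_pow v i x \<Longrightarrow> in_pow v j y \<Longrightarrow> in_pow v (i + j) (x * y)"
  unfolding in_pow_def using val_mult[of x y] by (cases "x = 0"; cases "y = 0") auto

lemma in_pow_minus: "in_pow v j (- x) \<longleftrightarrow> in_pow v j x"
  unfolding in_pow_def by (simp add: val_minus)

lemma in_pow_mono: "in_pow v j x \<Longrightarrow> i \<le> j \<Longrightarrow> in_pow v i x"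
  unfolding in_pow_def by auto

lemma diagonal_units_of_unit_det:
  assumes "in_pow v 0 a" "in_pow v 0 b" "in_pow v 0 d" "in_pow v 1 c" "is_unit_v v (a*d - b*c)"
  shows "is_unit_v v a \<and> is_unit_v v d"
proof -
  have "in_pow v 1 (b*c)" using in_pow_mult[OF assms(2,4)] by simp
  then have "(a*d - b*c) + b*c \<noteq> 0 \<and> v ((a*d - b*c) + b*c) = v (a*d - b*c)"
    using assms(5) by (intro val_add_dominant) (auto simp: in_pow_def is_unit_v_def)
  then have "a \<noteq> 0" "d \<noteq> 0" "v (a*d) = 0" using assms(5) by (auto simp: is_unit_v_def)
  then show ?thesis using val_mult[of a d] assms(1,3) by (simp add: in_pow_def is_unit_v_def)
qed

lemma K1_entries:
  assumes "mat2 A B C D \<in> K1 v n" "0 < n"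
  shows "is_unit_v v A \<and> in_pow v 0 B \<and> in_pow v (int n) C \<and> is_unit_v v D"
proof -
  have entries: "in_pow v 0 A" "in_pow v 0 B" "in_pow v 0 D" "in_pow v (int n) C"
    and det: "is_unit_v v (A*D - B*C)"
    using assms(1) unfolding K1_def Kmax_def by (auto simp: mat2_eq_iff)
  have "in_pow v 1 C" using in_pow_mono[OF entries(4)] assms(2) by simp
  then show ?thesis using diagonal_units_of_unit_det[OF entries(1-3) _ det] entries by simp
qed

lemma upper_triangular_in_K1: "in_pow v 0 B \<Longrightarrow> is_unit_v v D \<Longrightarrow> mat2 1 B 0 D \<in> K1 v n"
  unfolding K1_def Kmax_def in_pow_def is_unit_v_def by (auto simp: mat2_eq_iff val_one)

lemma level_of_bottom_row:
  assumes "0 < n" "l \<le> n" "is_unit_v v u" "mat2 A B C D \<in> K1 v n" "c0 \<noteq> 0"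
    and y: "y = \<pi> powi (- int l) * u"
    and R: "R = - c0 * (A + y*C)" "R \<noteq> 0" and S: "S = - c0 * (B + y*D)"
    and gap: "S = 0 \<or> v R - v S < int n"
  shows "l = (if S = 0 \<or> v R \<le> v S then 0 else nat (v R - v S))"
proof -
  obtain A_unit: "is_unit_v v A" and B_int: "in_pow v 0 B" and C_small: "in_pow v (int n) C"
    and D_unit: "is_unit_v v D"
    using K1_entries[OF assms(4,1)] by blast
  have "u \<noteq> 0" "v u = 0" using assms(3) by (auto simp: is_unit_v_def)
  then have "y \<noteq> 0" and val_y: "v y = - int l"
    using y unif_nonzero val_mult[of "\<pi> powi (- int l)" u] by (auto simp: val_unif_power_int)
  have yC: "in_pow v (int n - int l) (y*C)"
    using in_pow_mult[OF _ C_small, of "- int l" y] val_y by (simp add: in_pow_def)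
  have alpha: "A + y*C \<noteq> 0" using R by auto
  have val_R: "v R = v c0 + v (A + y*C)" using R alpha assms(5) by (simp add: val_minus val_mult)
  have alpha_int: "v (A + y*C) \<ge> 0"
  proof -
    have "in_pow v 0 (A + y*C)"
      using in_pow_add[OF _ in_pow_mono[OF yC, of 0]] A_unit assms(2) by (simp add: in_pow_def is_unit_v_def)
    with alpha show ?thesis by (simp add: in_pow_def)
  qed
  have alpha_unit: "v (A + y*C) = 0" if "l < n"
    using val_add_dominant[of A "y*C"] A_unit yC that by (auto simp: in_pow_def is_unit_v_def)
  show ?thesis
  proof (cases "l = 0")
    case True
    then have "in_pow v 0 (y*D)"
      using in_pow_mult[of 0 y 0 D] val_y D_unit by (simp add: in_pow_def is_unit_v_def)
    then have "in_pow v 0 (B + y*D)" using in_pow_add[OF B_int] by blast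
    then have "S = 0 \<or> v R \<le> v S"
      using S val_R alpha_unit True assms(1,5) val_mult[of c0 "B + y*D"]
      by (cases "B + y*D = 0") (auto simp: in_pow_def val_minus)
    with True show ?thesis by simp
  next
    case False
    have "v (y*D) = - int l" using val_mult[of y D] \<open>y \<noteq> 0\<close> D_unit val_y by (simp add: is_unit_v_def)
    then have "y*D + B \<noteq> 0 \<and> v (y*D + B) = - int l"
      using val_add_dominant[of "y*D" B] \<open>y \<noteq> 0\<close> D_unit B_int False
      by (auto simp: in_pow_def is_unit_v_def)
    then have "S \<noteq> 0" and val_S: "v S = v c0 - int l"
      using S assms(5) by (auto simp: add.commute val_minus val_mult)
    have "l < n"
      using gap \<open>S \<noteq> 0\<close> val_R val_S alpha_int assms(2) by linarith
    then have "v R - v S = int l" using val_R val_S alpha_unit by simp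
    with False \<open>S \<noteq> 0\<close> show ?thesis by simp
  qed
qed

lemma decomposition_at_level:
  assumes det: "P*S - Q*R \<noteq> 0" and "R \<noteq> 0"
    and L: "L = (if S = 0 \<or> v R \<le> v S then 0 else nat (v R - v S))"
  shows "\<exists>z x t u k. z \<in> center \<and> is_unit_v v u \<and> k \<in> K1 v n \<and>
           mat2 P Q R S = z ** nmat x ** amat (\<pi> powi t) ** wmat ** nmat (\<pi> powi (- int L) * u) ** k"
proof -
  define t where "t = v (P*S - Q*R) - 2 * v R"
  define D where "D = (P*S - Q*R) / (R^2 * \<pi> powi t)"
    \<comment> \<open>\<open>a(\<pi>\<^sup>t)\<close> absorbs the valuation of \<open>det h / R\<^sup>2\<close>, leaving the unit \<open>D\<close> for \<open>K\<^sub>1\<close>\<close>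
  have "R^2 \<noteq> 0" "\<pi> powi t \<noteq> 0" using \<open>R \<noteq> 0\<close> unif_nonzero by simp_all
  then have "v (R^2 * \<pi> powi t) = 2 * v R + t"
    using val_mult[of R R] val_mult[of "R^2" "\<pi> powi t"] \<open>R \<noteq> 0\<close>
    by (simp add: power2_eq_square val_unif_power_int)
  then have D_unit: "is_unit_v v D"
    using val_divide[OF det] \<open>R^2 \<noteq> 0\<close> \<open>\<pi> powi t \<noteq> 0\<close> det
    unfolding is_unit_v_def D_def t_def by simp
  have p: "\<pi> powi t * D = (P*S - Q*R) / R^2" using \<open>\<pi> powi t \<noteq> 0\<close> by (simp add: D_def)
  obtain B y u where "in_pow v 0 B" "is_unit_v v u" "y = \<pi> powi (- int L) * u" "B + y*D = S/R"
  proof (cases "S = 0 \<or> v R \<le> v S")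
    case True
    have "in_pow v 0 (S/R)"
      using True val_divide[of S R] \<open>R \<noteq> 0\<close> by (cases "S = 0") (auto simp: in_pow_def)
    then have "in_pow v 0 (S/R - D)"
      using in_pow_add[of 0 "S/R" "- D"] D_unit by (simp add: in_pow_def is_unit_v_def val_minus)
    then show thesis
      using that[of "S/R - D" 1 1] True L by (simp add: is_unit_v_def val_one)
  next
    case False
    then have "S \<noteq> 0" and val_L: "int L = v R - v S" using L by auto
    define y where "y = S / (R * D)"
    have "R * D \<noteq> 0" "v (R * D) = v R" using val_mult[of R D] D_unit \<open>R \<noteq> 0\<close> by (auto simp: is_unit_v_def)
    then have "y \<noteq> 0" "v y = - int L" using \<open>S \<noteq> 0\<close> val_divide[of S "R * D"] val_L by (simp_all add: y_def)
    then have "is_unit_v v (\<pi> powi int L * y)"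
      using val_mult[of "\<pi> powi int L" y] unif_nonzero by (simp add: is_unit_v_def val_unif_power)
    moreover have "y = \<pi> powi (- int L) * (\<pi> powi int L * y)"
      using unif_nonzero by (simp add: power_int_minus)
    moreover have "0 + y*D = S/R" using D_unit by (simp add: y_def is_unit_v_def)
    ultimately show thesis using that[of 0 "\<pi> powi int L * y" y] by (simp add: in_pow_def)
  qed
  moreover have "mat (- R) \<in> center" using \<open>R \<noteq> 0\<close> by (auto simp: center_def)
  ultimately show ?thesis
    using mat2_eq_decomposition[OF \<open>R \<noteq> 0\<close> _ p] upper_triangular_in_K1[of B D n] D_unit
    by blast
qed

lemma lvl_mat2:
  assumes "0 < n" "P*S - Q*R \<noteq> 0" "R \<noteq> 0" "S = 0 \<or> v R - v S < int n"
  shows "lvl v \<pi> n (mat2 P Q R S) = (if S = 0 \<or> v R \<le> v S then 0 else nat (v R - v S))"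
    (is "_ = ?L")
proof -
  have unique: "l = ?L"
    if "l \<le> n" "z \<in> center" "is_unit_v v u" "k \<in> K1 v n"
      and h: "mat2 P Q R S = z ** nmat x ** amat (\<pi> powi t) ** wmat ** nmat (\<pi> powi (- int l) * u) ** k"
    for l z x t u k
  proof -
    obtain c0 where "z = mat c0" "c0 \<noteq> 0" using \<open>z \<in> center\<close> by (auto simp: center_def)
    moreover obtain A B C D where "k = mat2 A B C D" using \<open>k \<in> K1 v n\<close> by (auto simp: K1_def)
    ultimately have "R = - c0 * (A + \<pi> powi (- int l) * u * C)" "S = - c0 * (B + \<pi> powi (- int l) * u * D)"
      using h by (simp_all add: mat2_decomposition mat2_eq_iff)
    then show ?thesis
      using level_of_bottom_row[OF assms(1) that(1,3) _ \<open>c0 \<noteq> 0\<close> refl _ assms(3) _ assms(4)]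
        that(4) \<open>k = mat2 A B C D\<close> by blast
  qed
  have "?L \<le> n" using assms(1,4) by auto
  then show ?thesis
    unfolding lvl_def using decomposition_at_level[OF assms(2,3) refl] unique
    by (intro the_equality) blast+
qed

lemma lvl_Kmax_amat_le:
  assumes "mat2 P Q R S \<in> Kmax v" "is_unit_v v R" "in_pow v 1 S" "0 < m" "m \<le> n"
  shows "lvl v \<pi> n (mat2 P Q R S ** amat (\<pi> ^ m)) \<le> m - 1"
proof -
  have "is_unit_v v (P*S - Q*R)" using assms(1) by (auto simp: Kmax_def mat2_eq_iff)
  then have det: "(P * \<pi>^m) * S - Q * (R * \<pi>^m) \<noteq> 0"
    using unif_nonzero by (simp add: is_unit_v_def algebra_simps flip: right_diff_distrib)
  have "R * \<pi>^m \<noteq> 0" and val_R: "v (R * \<pi>^m) = int m"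
    using assms(2) unif_nonzero val_mult[of R "\<pi>^m"] by (auto simp: is_unit_v_def val_unif_power)
  moreover have "S = 0 \<or> v S \<ge> 1" using assms(3) by (simp add: in_pow_def)
  ultimately show ?thesis
    using lvl_mat2[OF _ det] assms(4,5) by (auto simp: amat_def mat2_mult)
qed

lemma K0p_mult_wmat:
  assumes "k \<in> K0p v"
  obtains P Q R S where "k ** wmat = mat2 P Q R S" "mat2 P Q R S \<in> Kmax v"
    "is_unit_v v R" "in_pow v 1 S"
proof -
  obtain a b c d where k: "k = mat2 a b c d" and entries: "in_pow v 0 a" "in_pow v 0 b" "in_pow v 0 d"
    and "in_pow v 0 c" "in_pow v 1 c" "is_unit_v v (a*d - b*c)"
    using assms unfolding K0p_def Kmax_def by (auto simp: mat2_eq_iff)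
  moreover have "k ** wmat = mat2 (- b) a (- d) c" by (simp add: k wmat_def mat2_mult)
  moreover have "is_unit_v v (- d)"
    using diagonal_units_of_unit_det[OF entries] \<open>in_pow v 1 c\<close> \<open>is_unit_v v (a*d - b*c)\<close>
    by (simp add: is_unit_v_def val_minus)
  moreover have "(- b) * c - a * (- d) = a*d - b*c" by simp
  ultimately show thesis
    using that[of "- b" a "- d" c] unfolding Kmax_def by (metis (mono_tags, lifting) in_pow_minus mem_Collect_eq)
qed

end

theorem lemma2p2:
  fixes v :: "'a::field_char_0 \<Rightarrow> int" and \<pi> :: 'a and n :: nat and k g :: "'a^2^2"
  assumes "nonarch_local_field v"
    and "\<pi> \<noteq> 0" and "v \<pi> = 1"
    and "odd n"
    and "k \<in> K0p v"
    and "g \<in> {mat 1, mat2 0 1 \<pi> 0}"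
  shows "\<exists>k' g' z. k' \<in> Kmax v
           \<and> lvl v \<pi> n (k' ** amat (\<pi> ^ ((n + 1) div 2))) \<le> n div 2
           \<and> g' \<in> {mat 1, mat2 0 1 (\<pi> ^ n) 0}
           \<and> z \<in> center
           \<and> k ** g ** wmat ** amat (\<pi> ^ ((n + 1) div 2))
               = k' ** amat (\<pi> ^ ((n + 1) div 2)) ** g' ** z"
proof -
  interpret uniformized_local_field v \<pi> using assms(1-3) by unfold_locales
  obtain P Q R S where kw: "k ** wmat = mat2 P Q R S" "mat2 P Q R S \<in> Kmax v"
    and "is_unit_v v R" "in_pow v 1 S"
    using K0p_mult_wmat[OF assms(5)] .
  define N where "N = n div 2"
  have m: "(n + 1) div 2 = Suc N" and n: "n = 2 * N + 1" using \<open>odd n\<close> unfolding N_def by presburger+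
  have "lvl v \<pi> n (k ** wmat ** amat (\<pi> ^ Suc N)) \<le> N"
    using lvl_Kmax_amat_le[OF kw(2) \<open>is_unit_v v R\<close> \<open>in_pow v 1 S\<close>, of "Suc N" n] kw(1) n by simp
  moreover obtain g' z where "g' \<in> {mat 1, mat2 0 1 (\<pi> ^ n) 0}" "z \<in> center"
    and swap: "g ** wmat ** amat (\<pi> ^ Suc N) = wmat ** amat (\<pi> ^ Suc N) ** g' ** z"
  proof (cases "g = mat 1")
    case True
    have "mat 1 \<in> center" by (auto simp: center_def)
    with True show thesis using that[of "mat 1" "mat 1"] by simp
  next
    case False
    have "mat (- inverse (\<pi> ^ N)) \<in> center" using \<open>\<pi> \<noteq> 0\<close> unfolding center_def by force
    with False show thesis
      using that[of "mat2 0 1 (\<pi> ^ n) 0"] assms(6) antidiagonal_mult_wmat_amat[OF \<open>\<pi> \<noteq> 0\<close>, of N, folded n]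
      by auto
  qed
  moreover have "k ** g ** wmat ** amat (\<pi> ^ Suc N) = k ** wmat ** amat (\<pi> ^ Suc N) ** g' ** z"
    using arg_cong[OF swap, of "(**) k"] by (simp add: matrix_mul_assoc)
  ultimately show ?thesis
    using kw(2)[folded kw(1)] unfolding m N_def[symmetric] by blast
qed

end
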